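(* Let $X$ be as in the context. Let $0<s_0,s_1<\infty$, $0<p_0,q_0,p_1,q_1\le\infty$ and $0<\theta<1$. Define $s,p,q$ by \[ \frac1p = \frac{1-\theta}{p_0}+\frac{\theta}{p_1},\quad \frac1q=\frac{1-\theta}{q_0}+\frac{\theta}{q_1},\quad s=(1-\theta)s_0+\theta s_1. \] Then $\big(\mathcal I^{s_0}_{p_0,q_0}(X)\big)^{1-\theta}\big(\mathcal I^{s_1}_{p_1,q_1}(X)\big)^{\theta} = \mathcal I^s_{p,q}(X)$ with equivalent quasi-norms.
   Context: $(Z,d,\mu)$ is a metric measure space, $\mu$ Borel regular, every ball has positive finite measure, and $\mu$ is doubling ($\mu(B(\xi,2r))\le c\,\mu(B(\xi,r))$). Hyperbolic filling: for each $n\in\mathbb Z$ let $(\xi_x)_{x\in X_n}$ be a maximal set of points of $Z$ with pairwise distances at least $2^{-n-1}$; $X=\bigsqcup_n X_n$, $|x|:=n$ for $x\in X_n$, $B(x):=B(\xi_x,2^{-n})$. For $0<s<\infty$, $0<p,q\le\infty$, $\mathcal I^s_{p,q}(X)$ is the space of $u:X\to\mathbb C$ with $\|u\|_{\mathcal I^s_{p,q}(X)} := \big(\sum_{k\in\mathbb Z}2^{ksq}\|\sum_{x\in X_k}|u(x)|\chi_{B(x)}\|_{L^p(Z)}^q\big)^{1/q}<\infty$ (usual modification for $p$ or $q=\infty$). Calderón product: for quasi-Banach lattices $X_0,X_1$ of functions on a measure space $M$ and $0<\theta<1$, $X_0^{1-\theta}X_1^\theta$ is the space of measurable $f$ on $M$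 with $\|f\|_{X_0^{1-\theta}X_1^\theta}:=\inf\{\lambda>0: |f|\le\lambda|g|^{1-\theta}|h|^\theta \text{ a.e. for some } \|g\|_{X_0}\le1,\ \|h\|_{X_1}\le1\}<\infty$. Here $M=X$ with counting measure. *)

theory Defs
  imports "HOL-Analysis.Analysis"
begin

(* real power of an extended nonnegative real; exponent r > 0 intended *)
definition epow :: "ennreal \<Rightarrow> real \<Rightarrow> ennreal" where
  "epow x r = (if x = \<infinity> then \<infinity> else ennreal (enn2real x powr r))"

definition ess_sup_enn :: "'a measure \<Rightarrow> ('a \<Rightarrow> ennreal) \<Rightarrow> ennreal" where
  "ess_sup_enn M f = Inf {C. AE x in M. f x \<le> C}"

definition Lp_qnorm :: "'a measure \<Rightarrow> ennreal \<Rightarrow> ('a \<Rightarrow> ennreal) \<Rightarrow> ennreal" where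
  "Lp_qnorm M p f =
     (if p = \<infinity> then ess_sup_enn M f
      else epow (\<integral>\<^sup>+ z. epow (f z) (enn2real p) \<partial>M) (1 / enn2real p))"

definition lq_qnorm :: "ennreal \<Rightarrow> (int \<Rightarrow> ennreal) \<Rightarrow> ennreal" where
  "lq_qnorm q a =
     (if q = \<infinity> then (SUP k. a k)
      else epow (\<integral>\<^sup>+ k. epow (a k) (enn2real q) \<partial>count_space UNIV) (1 / enn2real q))"

(* the hyperbolic filling: Xs n is the set of centres at level n;
   X is the disjoint union, a vertex x is a pair (n, \<xi>_x) with |x| = n *)
definition hf_vertices :: "(int \<Rightarrow> 'a set) \<Rightarrow> (int \<times> 'a) set" where
  "hf_vertices Xs = {(n, \<xi>). \<xi> \<in> Xs n}"

definition hf_ball :: "int \<times> 'a::metric_space \<Rightarrow> 'a set" where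
  "hf_ball x = ball (snd x) (2 powr (- real_of_int (fst x)))"

(* functions u : X \<rightarrow> \<complex>, represented as functions vanishing off X *)
definition hf_funs :: "(int \<Rightarrow> 'a set) \<Rightarrow> (int \<times> 'a \<Rightarrow> complex) set" where
  "hf_funs Xs = {u. \<forall>x. x \<notin> hf_vertices Xs \<longrightarrow> u x = 0}"

definition maximal_separated :: "real \<Rightarrow> 'a::metric_space set \<Rightarrow> bool" where
  "maximal_separated r S \<longleftrightarrow>
     (\<forall>a\<in>S. \<forall>b\<in>S. a \<noteq> b \<longrightarrow> dist a b \<ge> r) \<and>
     (\<forall>z. z \<notin> S \<longrightarrow> (\<exists>a\<in>S. dist z a < r))"

definition hyperbolic_filling :: "(int \<Rightarrow> 'a::metric_space set) \<Rightarrow> bool" where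
  "hyperbolic_filling Xs \<longleftrightarrow> (\<forall>n. maximal_separated (2 powr (- real_of_int n - 1)) (Xs n))"

definition level_fun :: "(int \<Rightarrow> 'a::metric_space set) \<Rightarrow> (int \<times> 'a \<Rightarrow> complex) \<Rightarrow> int \<Rightarrow> 'a \<Rightarrow> ennreal" where
  "level_fun Xs u k z =
     (\<integral>\<^sup>+ \<xi>. ennreal (norm (u (k, \<xi>))) * indicator (hf_ball (k, \<xi>)) z \<partial>count_space (Xs k))"

definition I_qnorm :: "'a::metric_space measure \<Rightarrow> (int \<Rightarrow> 'a set) \<Rightarrow> real \<Rightarrow> ennreal \<Rightarrow> ennreal
    \<Rightarrow> (int \<times> 'a \<Rightarrow> complex) \<Rightarrow> ennreal" where
  "I_qnorm \<mu> Xs s p q u =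
     lq_qnorm q (\<lambda>k. ennreal (2 powr (real_of_int k * s)) * Lp_qnorm \<mu> p (level_fun Xs u k))"

definition I_space :: "'a::metric_space measure \<Rightarrow> (int \<Rightarrow> 'a set) \<Rightarrow> real \<Rightarrow> ennreal \<Rightarrow> ennreal
    \<Rightarrow> (int \<times> 'a \<Rightarrow> complex) set" where
  "I_space \<mu> Xs s p q = {u \<in> hf_funs Xs. I_qnorm \<mu> Xs s p q u < \<infinity>}"

(* Calder\<acute>on product quasi-norm of two lattices of functions on X (counting measure,
   so "a.e." means "everywhere on X") *)
definition calderon_qnorm :: "(int \<Rightarrow> 'a set) \<Rightarrow> ((int \<times> 'a \<Rightarrow> complex) \<Rightarrow> ennreal)
    \<Rightarrow> ((int \<times> 'a \<Rightarrow> complex) \<Rightarrow> ennreal) \<Rightarrow> real \<Rightarrow> (int \<times> 'a \<Rightarrow> complex) \<Rightarrow> ennreal" where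
  "calderon_qnorm Xs N0 N1 \<theta> f =
     Inf {ennreal c | c. c > 0 \<and>
        (\<exists>g h. g \<in> hf_funs Xs \<and> h \<in> hf_funs Xs \<and> N0 g \<le> 1 \<and> N1 h \<le> 1 \<and>
           (\<forall>x\<in>hf_vertices Xs. norm (f x) \<le> c * norm (g x) powr (1 - \<theta>) * norm (h x) powr \<theta>))}"

definition calderon_space :: "(int \<Rightarrow> 'a set) \<Rightarrow> ((int \<times> 'a \<Rightarrow> complex) \<Rightarrow> ennreal)
    \<Rightarrow> ((int \<times> 'a \<Rightarrow> complex) \<Rightarrow> ennreal) \<Rightarrow> real \<Rightarrow> (int \<times> 'a \<Rightarrow> complex) set" where
  "calderon_space Xs N0 N1 \<theta> = {f \<in> hf_funs Xs. calderon_qnorm Xs N0 N1 \<theta> f < \<infinity>}"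

end

(* Both estimates are proved level by level of the filling. If |u| <= C |g|^(1-\<theta>) |h|^\<theta>,
   Hoelder's inequality, applied to the finite sums defining the level functions, then in L^p and
   finally in l^q (with 2^(ks) = (2^(k s0))^(1-\<theta>) (2^(k s1))^\<theta>), bounds the I^s_{p,q} norm of u
   by C. Conversely, let \<Lambda> be the I^s_{p,q} norm of u, A_k the L^p norm of its level k and
   b_k = 2^(ks) A_k / \<Lambda>. Then g = |u|^(p/p0) b_k^(q/q0) 2^(-k s0) / A_k^(p/p0) and the analogous h
   satisfy |u| = \<Lambda> |g|^(1-\<theta>) |h|^\<theta>. Since a point lies in at most c^4 balls of one level
   (doubling), the level functions of |u|^\<alpha> are bounded by c^4 times the \<alpha>-th powers of those
   of u, and g, h have norm at most c^4 in the endpoint spaces. *)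

theory Submission
  imports Defs "HOL-Probability.Essential_Supremum"
begin

lemma epow_ennreal: "0 \<le> x \<Longrightarrow> epow (ennreal x) r = ennreal (x powr r)"
  by (simp add: epow_def)

lemma epow_top [simp]: "epow top r = top"
  by (simp add: epow_def)

lemma epow_zero [simp]: "epow 0 r = 0"
  by (simp add: epow_def)

lemma epow_one_right [simp]: "epow x 1 = x"
  by (cases x) (auto simp: epow_def)

lemma epow_eq_top_iff [simp]: "epow x r = top \<longleftrightarrow> x = top"
  by (simp add: epow_def)

lemma epow_eq_0_iff [simp]: "epow x r = 0 \<longleftrightarrow> x = 0"
  by (cases x) (auto simp: epow_def)

lemma epow_mult: "epow (a * b) r = epow a r * epow b r"
proof (cases "a = 0 \<or> b = 0")
  case False
  show ?thesis
  proof (cases "a = top \<or> b = top")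
    case True
    then show ?thesis
      using False by (auto simp: ennreal_mult_eq_top_iff ennreal_mult_top ennreal_top_mult)
  next
    case fin: False
    then obtain x y where "a = ennreal x" "b = ennreal y" "0 \<le> x" "0 \<le> y"
      by (cases a; cases b) auto
    then show ?thesis
      by (simp add: epow_ennreal powr_mult flip: ennreal_mult)
  qed
qed auto

lemma epow_epow: "epow (epow x a) b = epow x (a * b)"
  by (cases x) (auto simp: epow_def powr_powr)

lemma epow_mono:
  assumes "x \<le> y" and "0 \<le> r"
  shows "epow x r \<le> epow y r"
proof (cases y)
  case (real b)
  then obtain a where "x = ennreal a" "0 \<le> a" "a \<le> b"
    using assms(1) by (cases x) (auto simp: top_unique)
  then show ?thesis
    using real assms(2) by (auto simp: epow_ennreal intro: powr_mono2 ennreal_leI)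
qed simp

lemma epow_le_one: "x \<le> 1 \<Longrightarrow> 0 \<le> r \<Longrightarrow> epow x r \<le> 1"
  using epow_mono[of x 1 r] by (simp add: epow_def)

lemma epow_measurable [measurable]:
  assumes [measurable]: "f \<in> borel_measurable M"
  shows "(\<lambda>z. epow (f z) r) \<in> borel_measurable M"
  unfolding epow_def by measurable

lemma epow_cmult: "0 \<le> c \<Longrightarrow> epow (ennreal c * x) r = ennreal (c powr r) * epow x r"
  by (simp add: epow_mult epow_ennreal)

section \<open>Essential suprema and \<open>L\<^sup>p\<close> quasi-norms\<close>

lemma enn2real_pos: "0 < p \<Longrightarrow> p \<noteq> top \<Longrightarrow> 0 < enn2real p"
  by (simp add: enn2real_positive_iff less_top)

lemma Lp_qnorm_finite:
  "p \<noteq> top \<Longrightarrow> Lp_qnorm M p f = epow (\<integral>\<^sup>+ z. epow (f z) (enn2real p) \<partial>M) (1 / enn2real p)"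
  by (simp add: Lp_qnorm_def)

lemma Lp_qnorm_top: "Lp_qnorm M top f = ess_sup_enn M f"
  by (simp add: Lp_qnorm_def)

lemma AE_le_ess_sup_enn:
  assumes "f \<in> borel_measurable M"
  shows "AE x in M. f x \<le> ess_sup_enn M f"
  using esssup_AE[of f M] esssup_eq_AE[OF assms] by (simp add: ess_sup_enn_def)

lemma ess_sup_enn_le: "AE x in M. f x \<le> C \<Longrightarrow> ess_sup_enn M f \<le> C"
  unfolding ess_sup_enn_def by (rule Inf_lower) simp

lemma ess_sup_enn_mono: "(\<And>z. f z \<le> g z) \<Longrightarrow> ess_sup_enn M f \<le> ess_sup_enn M g"
  unfolding ess_sup_enn_def
  by (rule Inf_superset_mono) (auto elim: eventually_mono intro: order_trans)

lemma Lp_qnorm_mono: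
  assumes "\<And>z. f z \<le> g z"
  shows "Lp_qnorm M p f \<le> Lp_qnorm M p g"
proof (cases "p = top")
  case True
  then show ?thesis using ess_sup_enn_mono[OF assms] by (simp add: Lp_qnorm_top)
next
  case False
  have "(\<integral>\<^sup>+ z. epow (f z) (enn2real p) \<partial>M) \<le> (\<integral>\<^sup>+ z. epow (g z) (enn2real p) \<partial>M)"
    by (intro nn_integral_mono epow_mono assms) simp
  then show ?thesis using False by (simp add: Lp_qnorm_finite epow_mono)
qed

lemma Lp_qnorm_zero: "Lp_qnorm M p (\<lambda>_. 0) = 0"
proof (cases "p = top")
  case True
  have "ess_sup_enn M (\<lambda>_. 0) \<le> 0" by (rule ess_sup_enn_le) simp
  then show ?thesis using True by (simp add: Lp_qnorm_top)
qed (simp add: Lp_qnorm_finite)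

lemma Lp_qnorm_cmult:
  assumes [measurable]: "f \<in> borel_measurable M" and "0 \<le> c" and "0 < p"
  shows "Lp_qnorm M p (\<lambda>z. ennreal c * f z) \<le> ennreal c * Lp_qnorm M p f"
proof (cases "p = top")
  case True
  have "AE z in M. ennreal c * f z \<le> ennreal c * ess_sup_enn M f"
    using AE_le_ess_sup_enn[of f M] by (auto elim!: eventually_mono intro: mult_left_mono)
  then show ?thesis using True by (simp add: Lp_qnorm_top ess_sup_enn_le)
next
  case False
  define P where "P = enn2real p"
  have P: "0 < P" using \<open>0 < p\<close> False by (simp add: P_def enn2real_pos)
  have "(\<integral>\<^sup>+ z. epow (ennreal c * f z) P \<partial>M) = (\<integral>\<^sup>+ z. ennreal (c powr P) * epow (f z) P \<partial>M)"
    using \<open>0 \<le> c\<close> by (simp add: epow_cmult)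
  also have "\<dots> = ennreal (c powr P) * (\<integral>\<^sup>+ z. epow (f z) P \<partial>M)"
    by (rule nn_integral_cmult) measurable
  finally show ?thesis
    using False \<open>0 \<le> c\<close> P by (simp add: Lp_qnorm_finite P_def[symmetric] epow_cmult powr_powr)
qed

lemma AE_eq_0_if_Lp_qnorm_eq_0:
  assumes [measurable]: "f \<in> borel_measurable M" and "0 < p" and "Lp_qnorm M p f = 0"
  shows "AE x in M. f x = 0"
proof (cases "p = top")
  case True
  then show ?thesis
    using AE_le_ess_sup_enn[of f M] assms(3) by (auto simp: Lp_qnorm_top elim: eventually_mono)
next
  case False
  then have "(\<integral>\<^sup>+ z. epow (f z) (enn2real p) \<partial>M) = 0"
    using assms(3) by (simp add: Lp_qnorm_finite)
  then have "AE x in M. epow (f x) (enn2real p) = 0"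
    by (subst (asm) nn_integral_0_iff_AE) measurable
  then show ?thesis by (auto elim: eventually_mono)
qed

lemma AE_finite_if_Lp_qnorm_finite:
  assumes [measurable]: "f \<in> borel_measurable M" and "p \<noteq> top" and "Lp_qnorm M p f \<noteq> top"
  shows "AE x in M. f x \<noteq> top"
proof -
  have "(\<integral>\<^sup>+ z. epow (f z) (enn2real p) \<partial>M) \<noteq> top"
    using assms(2,3) by (simp add: Lp_qnorm_finite)
  then have "AE x in M. epow (f x) (enn2real p) \<noteq> top"
    using nn_integral_PInf_AE[of "\<lambda>x. epow (f x) (enn2real p)" M] by simp
  then show ?thesis by (auto elim: eventually_mono)
qed

lemma lq_qnorm_eq_Lp_qnorm: "lq_qnorm q a = Lp_qnorm (count_space UNIV) q a"
proof (cases "q = top")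
  case True
  have "(SUP k. a k) = Inf {C. AE x in count_space UNIV. a x \<le> C}"
  proof (rule antisym)
    show "(SUP k. a k) \<le> Inf {C. AE x in count_space UNIV. a x \<le> C}"
      by (rule Inf_greatest) (auto simp: AE_count_space intro: SUP_least)
    show "Inf {C. AE x in count_space UNIV. a x \<le> C} \<le> (SUP k. a k)"
      by (rule Inf_lower) (auto simp: AE_count_space intro: SUP_upper)
  qed
  then show ?thesis using True by (simp add: lq_qnorm_def Lp_qnorm_def ess_sup_enn_def)
qed (simp add: lq_qnorm_def Lp_qnorm_def)

lemma le_lq_qnorm:
  assumes "0 < q"
  shows "a k \<le> lq_qnorm q a"
proof (cases "q = top")
  case True
  then show ?thesis by (simp add: lq_qnorm_def SUP_upper)
next
  case False
  define Q where "Q = enn2real q"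
  have Q: "0 < Q" using assms False by (simp add: Q_def enn2real_pos)
  have "epow (a k) Q = (\<integral>\<^sup>+ x. epow (a k) Q * indicator {k} x \<partial>count_space UNIV)"
    by (simp add: nn_integral_cmult_indicator)
  also have "\<dots> \<le> (\<integral>\<^sup>+ x. epow (a x) Q \<partial>count_space UNIV)"
    by (intro nn_integral_mono) (auto simp: indicator_def)
  finally have "epow (epow (a k) Q) (1 / Q) \<le> epow (\<integral>\<^sup>+ x. epow (a x) Q \<partial>count_space UNIV) (1 / Q)"
    using Q by (intro epow_mono) auto
  then show ?thesis using False Q by (simp add: lq_qnorm_def Q_def epow_epow)
qed

lemma enn2real_inverse: "enn2real (inverse p) = (if p = top then 0 else 1 / enn2real p)"
proof (cases p)
  case (real r)
  then show ?thesis by (cases "r = 0") (auto simp: inverse_ennreal divide_inverse)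
qed simp

lemma interpolated_inverse:
  assumes \<theta>: "0 < \<theta>" "\<theta> < 1" and "0 < p0" "0 < p1"
    and p: "inverse p = ennreal (1 - \<theta>) * inverse p0 + ennreal \<theta> * inverse p1"
  shows "0 < p"
    and "enn2real (inverse p) = (1 - \<theta>) * enn2real (inverse p0) + \<theta> * enn2real (inverse p1)"
    and "p = top \<Longrightarrow> p0 = top \<and> p1 = top"
proof -
  define i0 where "i0 = enn2real (inverse p0)"
  define i1 where "i1 = enn2real (inverse p1)"
  have i: "inverse p0 = ennreal i0" "inverse p1 = ennreal i1" "0 \<le> i0" "0 \<le> i1"
    using \<open>0 < p0\<close> \<open>0 < p1\<close> by (auto simp: i0_def i1_def ennreal_enn2real_if)
  have ip: "inverse p = ennreal ((1 - \<theta>) * i0 + \<theta> * i1)"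
    using p i \<theta> by (simp add: ennreal_mult ennreal_plus)
  then show "0 < p"
    using ennreal_inverse_eq_top_iff[of p] by (metis ennreal_neq_top not_gr_zero)
  show "enn2real (inverse p) = (1 - \<theta>) * enn2real (inverse p0) + \<theta> * enn2real (inverse p1)"
    unfolding ip i0_def[symmetric] i1_def[symmetric] using i \<theta> by (simp del: ennreal_plus)
  assume "p = top"
  then have "(1 - \<theta>) * i0 \<le> 0" "\<theta> * i1 \<le> 0"
    using ip i \<theta> by (simp_all add: ennreal_eq_0_iff)
  then have "i0 = 0" "i1 = 0"
    using i \<theta> by (simp_all add: mult_le_0_iff)
  then show "p0 = top \<and> p1 = top"
    using i by simp
qed

(* p / p0, read as 1 when p = \<infinity> (in every use p0 = \<infinity> as well) *)
definition exponent_ratio :: "ennreal \<Rightarrow> ennreal \<Rightarrow> real" where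
  "exponent_ratio p p0 = (if p = top then 1 else enn2real p * enn2real (inverse p0))"

lemma exponent_ratio_nonneg: "0 \<le> exponent_ratio p p0"
  by (simp add: exponent_ratio_def)

lemma exponent_ratio_interpolation:
  assumes \<theta>: "0 < \<theta>" "\<theta> < 1" and "0 < p0" "0 < p1"
    and p: "inverse p = ennreal (1 - \<theta>) * inverse p0 + ennreal \<theta> * inverse p1"
  shows "(1 - \<theta>) * exponent_ratio p p0 + \<theta> * exponent_ratio p p1 = 1"
proof (cases "p = top")
  case False
  note ip = interpolated_inverse[OF assms]
  have "0 < enn2real p" using ip(1) False by (simp add: enn2real_pos)
  then have "enn2real p * enn2real (inverse p) = 1"
    using False by (simp add: enn2real_inverse)
  then have "enn2real p * ((1 - \<theta>) * enn2real (inverse p0) + \<theta> * enn2real (inverse p1)) = 1"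
    by (simp only: ip(2))
  then show ?thesis using False by (simp add: exponent_ratio_def algebra_simps)
qed (simp add: exponent_ratio_def)

(* the case p0 = \<infinity> of Lp_qnorm_epow below; note epow 0 0 = 0 and epow \<infinity> 0 = \<infinity> *)
lemma ess_sup_enn_epow_0_le:
  assumes [measurable]: "f \<in> borel_measurable M" and "0 < p" "p \<noteq> top"
  shows "ess_sup_enn M (\<lambda>z. epow (f z) 0) \<le> epow (Lp_qnorm M p f) 0"
proof -
  consider "Lp_qnorm M p f = 0" | "Lp_qnorm M p f = top" | "Lp_qnorm M p f \<noteq> 0" "Lp_qnorm M p f \<noteq> top"
    by blast
  then show ?thesis
  proof cases
    case 1
    then show ?thesis
      using AE_eq_0_if_Lp_qnorm_eq_0[OF assms(1,2)] by (intro ess_sup_enn_le) (auto elim: eventually_mono)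
  next
    case 3
    have "AE x in M. epow (f x) 0 \<le> 1"
      using AE_finite_if_Lp_qnorm_finite[OF assms(1,3) 3(2)] by (rule eventually_mono) (simp add: epow_def)
    moreover have "epow (Lp_qnorm M p f) 0 = 1"
      using 3 by (cases "Lp_qnorm M p f") (auto simp: epow_def)
    ultimately show ?thesis by (simp add: ess_sup_enn_le)
  qed simp
qed

lemma Lp_qnorm_epow:
  assumes [measurable]: "f \<in> borel_measurable M" and "0 < p0" "0 < p" and "p = top \<Longrightarrow> p0 = top"
  shows "Lp_qnorm M p0 (\<lambda>z. epow (f z) (exponent_ratio p p0))
    \<le> epow (Lp_qnorm M p f) (exponent_ratio p p0)"
proof (cases "p = top")
  case True
  with assms(4) show ?thesis by (simp add: exponent_ratio_def)
next
  case pfin: False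
  show ?thesis
  proof (cases "p0 = top")
    case True
    then show ?thesis
      using ess_sup_enn_epow_0_le[OF assms(1,3) pfin] pfin by (simp add: exponent_ratio_def Lp_qnorm_top)
  next
    case False
    then have "exponent_ratio p p0 = enn2real p / enn2real p0"
      using pfin by (simp add: exponent_ratio_def enn2real_inverse)
    then show ?thesis
      using pfin False enn2real_pos[OF \<open>0 < p\<close> pfin] enn2real_pos[OF \<open>0 < p0\<close> False]
      by (simp add: Lp_qnorm_finite epow_epow)
  qed
qed

section \<open>Hoelder's inequality\<close>

lemma Youngs_inequality_scaled:
  fixes x y a b r r' :: real
  assumes "0 \<le> x" "0 \<le> y" "0 < a" "0 < b" "1 < r" "1 < r'" "1 / r + 1 / r' = 1"
  shows "x * y \<le> a powr (1 / r) * b powr (1 / r') * (x powr r / (r * a) + y powr r' / (r' * b))"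
proof -
  define A B where "A = a powr (1 / r)" and "B = b powr (1 / r')"
  have AB: "0 < A" "0 < B" "A powr r = a" "B powr r' = b"
    using assms by (simp_all add: A_def B_def powr_powr)
  have "(x / A) * (y / B) \<le> (x / A) powr r / r + (y / B) powr r' / r'"
    using Youngs_inequality[of r r' "x / A" "y / B"] assms AB by simp
  also have "\<dots> = x powr r / (r * a) + y powr r' / (r' * b)"
    using assms AB by (simp add: powr_divide mult.commute)
  finally show ?thesis
    using AB by (simp add: A_def[symmetric] B_def[symmetric] field_simps)
qed

lemma nn_integral_Holder_finite:
  assumes [measurable]: "f \<in> borel_measurable M" "g \<in> borel_measurable M"
    and r: "1 < r" "1 < r'" "1 / r + 1 / r' = 1"
    and a: "(\<integral>\<^sup>+ z. epow (f z) r \<partial>M) = ennreal a" "0 < a"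
    and b: "(\<integral>\<^sup>+ z. epow (g z) r' \<partial>M) = ennreal b" "0 < b"
  shows "(\<integral>\<^sup>+ z. f z * g z \<partial>M) \<le> ennreal (a powr (1 / r) * b powr (1 / r'))"
proof -
  define C where "C = a powr (1 / r) * b powr (1 / r')"
  have C: "0 < C" using a b by (simp add: C_def)
  have "AE z in M. epow (f z) r \<noteq> top" "AE z in M. epow (g z) r' \<noteq> top"
    using nn_integral_PInf_AE[of "\<lambda>z. epow (f z) r" M] nn_integral_PInf_AE[of "\<lambda>z. epow (g z) r'" M] a b
    by auto
  then have "AE z in M. f z * g z
      \<le> ennreal (C / (r * a)) * epow (f z) r + ennreal (C / (r' * b)) * epow (g z) r'"
  proof eventually_elim
    case (elim z)
    then obtain x y where xy: "f z = ennreal x" "g z = ennreal y" "0 \<le> x" "0 \<le> y"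
      by (cases "f z"; cases "g z") auto
    have "x * y \<le> C / (r * a) * x powr r + C / (r' * b) * y powr r'"
      using Youngs_inequality_scaled[OF xy(3,4) a(2) b(2) r] by (simp add: C_def field_simps)
    then show ?case
      using xy C a b r by (simp add: epow_ennreal ennreal_plus[symmetric] ennreal_mult'[symmetric]
          ennreal_leI del: ennreal_plus)
  qed
  then have "(\<integral>\<^sup>+ z. f z * g z \<partial>M)
      \<le> (\<integral>\<^sup>+ z. ennreal (C / (r * a)) * epow (f z) r + ennreal (C / (r' * b)) * epow (g z) r' \<partial>M)"
    by (rule nn_integral_mono_AE)
  also have "\<dots> = ennreal (C / (r * a)) * ennreal a + ennreal (C / (r' * b)) * ennreal b"
    by (simp add: nn_integral_add nn_integral_cmult a(1) b(1))
  also have "\<dots> = ennreal (C * (1 / r + 1 / r'))"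
    using a b C r by (simp add: ennreal_mult[symmetric] ennreal_plus[symmetric] field_simps
        del: ennreal_plus)
  finally show ?thesis using r by (simp add: C_def)
qed

lemma nn_integral_Holder:
  assumes [measurable]: "f \<in> borel_measurable M" "g \<in> borel_measurable M"
    and r: "1 < r" "1 < r'" "1 / r + 1 / r' = 1"
  shows "(\<integral>\<^sup>+ z. f z * g z \<partial>M)
    \<le> epow (\<integral>\<^sup>+ z. epow (f z) r \<partial>M) (1 / r) * epow (\<integral>\<^sup>+ z. epow (g z) r' \<partial>M) (1 / r')"
    (is "?L \<le> epow ?A _ * epow ?B _")
proof -
  consider "?A = 0 \<or> ?B = 0" | "?A = top \<or> ?B = top" "?A \<noteq> 0" "?B \<noteq> 0"
    | a b where "?A = ennreal a" "?B = ennreal b" "0 < a" "0 < b"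
    by (cases ?A; cases ?B) (auto simp: le_less)
  then show ?thesis
  proof cases
    case 1
    then have "AE z in M. epow (f z) r = 0 \<or> epow (g z) r' = 0"
      by (auto simp: nn_integral_0_iff_AE elim: eventually_mono)
    then have "?L = 0" by (subst nn_integral_0_iff_AE) (auto elim: eventually_mono)
    then show ?thesis by simp
  next
    case 2
    then show ?thesis by (auto simp: ennreal_mult_top ennreal_top_mult)
  next
    case (3 a b)
    then show ?thesis
      using nn_integral_Holder_finite[OF assms 3(1,3,2,4)] by (simp add: epow_ennreal ennreal_mult)
  qed
qed

lemma Lp_qnorm_Holder_top_left:
  assumes [measurable]: "F \<in> borel_measurable M" "G \<in> borel_measurable M"
    and \<theta>: "0 < \<theta>" "\<theta> < 1" and p: "0 < p" "p \<noteq> top" and "p1 \<noteq> top"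
    and exps: "\<theta> * enn2real p = enn2real p1"
  shows "Lp_qnorm M p (\<lambda>z. epow (F z) (1 - \<theta>) * epow (G z) \<theta>)
    \<le> epow (ess_sup_enn M F) (1 - \<theta>) * epow (Lp_qnorm M p1 G) \<theta>"
proof -
  define P P1 E where "P = enn2real p" and "P1 = enn2real p1" and "E = ess_sup_enn M F"
  have P: "0 < P" using p by (simp add: P_def enn2real_pos)
  have "AE z in M. epow (epow (F z) (1 - \<theta>) * epow (G z) \<theta>) P \<le> epow E ((1 - \<theta>) * P) * epow (G z) P1"
    using AE_le_ess_sup_enn[OF assms(1)]
  proof eventually_elim
    case (elim z)
    then show ?case
      using exps \<theta> P by (auto simp: epow_mult epow_epow P_def P1_def E_def intro!: mult_right_mono epow_mono)
  qed
  then have "(\<integral>\<^sup>+z. epow (epow (F z) (1 - \<theta>) * epow (G z) \<theta>) P \<partial>M)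
      \<le> epow E ((1 - \<theta>) * P) * (\<integral>\<^sup>+z. epow (G z) P1 \<partial>M)"
    by (subst nn_integral_cmult[symmetric]) (auto intro: nn_integral_mono_AE)
  then have "Lp_qnorm M p (\<lambda>z. epow (F z) (1 - \<theta>) * epow (G z) \<theta>)
      \<le> epow (epow E ((1 - \<theta>) * P) * (\<integral>\<^sup>+z. epow (G z) P1 \<partial>M)) (1 / P)"
    using p P by (simp add: Lp_qnorm_finite P_def epow_mono)
  also have "\<dots> = epow E (1 - \<theta>) * epow (\<integral>\<^sup>+z. epow (G z) P1 \<partial>M) (1 / P1 * \<theta>)"
  proof -
    have "(1 - \<theta>) * P * (1 / P) = 1 - \<theta>" "1 / P = 1 / P1 * \<theta>"
      using exps[symmetric] P \<theta> by (simp_all add: P_def P1_def)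
    then show ?thesis by (simp only: epow_mult epow_epow)
  qed
  finally show ?thesis
    using \<open>p1 \<noteq> top\<close> by (simp add: Lp_qnorm_finite E_def P1_def epow_epow)
qed

lemma Lp_qnorm_Holder_finite:
  assumes [measurable]: "F \<in> borel_measurable M" "G \<in> borel_measurable M"
    and \<theta>: "0 < \<theta>" "\<theta> < 1" and fin: "p \<noteq> top" "p0 \<noteq> top" "p1 \<noteq> top"
    and pos: "0 < p" "0 < p0" "0 < p1"
    and exps: "1 / enn2real p = (1 - \<theta>) / enn2real p0 + \<theta> / enn2real p1"
  shows "Lp_qnorm M p (\<lambda>z. epow (F z) (1 - \<theta>) * epow (G z) \<theta>)
    \<le> epow (Lp_qnorm M p0 F) (1 - \<theta>) * epow (Lp_qnorm M p1 G) \<theta>"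
proof -
  define P P0 P1 where "P = enn2real p" and "P0 = enn2real p0" and "P1 = enn2real p1"
  have P: "0 < P" "0 < P0" "0 < P1"
    using fin pos by (simp_all add: P_def P0_def P1_def enn2real_pos)
  define r r' where "r = P0 / ((1 - \<theta>) * P)" and "r' = P1 / (\<theta> * P)"
  have rr: "1 / r + 1 / r' = 1"
    using exps P \<theta> by (simp add: r_def r'_def P_def[symmetric] P0_def[symmetric] P1_def[symmetric] field_simps)
  moreover have "0 < r" "0 < r'"
    using P \<theta> by (simp_all add: r_def r'_def)
  ultimately have r: "1 < r" "1 < r'"
    by (smt (verit) divide_less_eq_1_pos zero_less_divide_1_iff)+
  have "(\<integral>\<^sup>+z. epow (epow (F z) (1 - \<theta>) * epow (G z) \<theta>) P \<partial>M)
      = (\<integral>\<^sup>+z. epow (F z) ((1 - \<theta>) * P) * epow (G z) (\<theta> * P) \<partial>M)"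
    by (simp add: epow_mult epow_epow)
  also have "\<dots> \<le> epow (\<integral>\<^sup>+z. epow (F z) P0 \<partial>M) ((1 - \<theta>) * P / P0)
      * epow (\<integral>\<^sup>+z. epow (G z) P1 \<partial>M) (\<theta> * P / P1)"
    using nn_integral_Holder[of "\<lambda>z. epow (F z) ((1 - \<theta>) * P)" M "\<lambda>z. epow (G z) (\<theta> * P)" r r'] r rr P \<theta>
    by (simp add: epow_epow r_def r'_def)
  finally have "Lp_qnorm M p (\<lambda>z. epow (F z) (1 - \<theta>) * epow (G z) \<theta>)
      \<le> epow (epow (\<integral>\<^sup>+z. epow (F z) P0 \<partial>M) ((1 - \<theta>) * P / P0)
          * epow (\<integral>\<^sup>+z. epow (G z) P1 \<partial>M) (\<theta> * P / P1)) (1 / P)"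
    using fin P by (simp add: Lp_qnorm_finite P_def epow_mono)
  also have "\<dots> = epow (\<integral>\<^sup>+z. epow (F z) P0 \<partial>M) (1 / P0 * (1 - \<theta>))
      * epow (\<integral>\<^sup>+z. epow (G z) P1 \<partial>M) (1 / P1 * \<theta>)"
    using P by (simp add: epow_mult epow_epow)
  finally show ?thesis
    using fin by (simp add: Lp_qnorm_finite P0_def P1_def epow_epow)
qed

lemma Lp_qnorm_Holder:
  assumes F [measurable]: "F \<in> borel_measurable M" and G [measurable]: "G \<in> borel_measurable M"
    and \<theta>: "0 < \<theta>" "\<theta> < 1" and p0: "0 < p0" and p1: "0 < p1"
    and p: "inverse p = ennreal (1 - \<theta>) * inverse p0 + ennreal \<theta> * inverse p1"
  shows "Lp_qnorm M p (\<lambda>z. epow (F z) (1 - \<theta>) * epow (G z) \<theta>)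
    \<le> epow (Lp_qnorm M p0 F) (1 - \<theta>) * epow (Lp_qnorm M p1 G) \<theta>"
proof (cases "p = top")
  case True
  then have "p0 = top" "p1 = top" using interpolated_inverse(3)[OF \<theta> p0 p1 p] by auto
  have "AE z in M. epow (F z) (1 - \<theta>) * epow (G z) \<theta>
      \<le> epow (ess_sup_enn M F) (1 - \<theta>) * epow (ess_sup_enn M G) \<theta>"
    using AE_le_ess_sup_enn[OF F] AE_le_ess_sup_enn[OF G]
    by eventually_elim (use \<theta> in \<open>auto intro!: mult_mono epow_mono\<close>)
  then show ?thesis using True \<open>p0 = top\<close> \<open>p1 = top\<close> by (simp add: Lp_qnorm_top ess_sup_enn_le)
next
  case pfin: False
  have "0 < p" using interpolated_inverse(1)[OF \<theta> p0 p1 p] .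
  then have P: "0 < enn2real p" using pfin by (simp add: enn2real_pos)
  have exps: "1 / enn2real p = (1 - \<theta>) * (if p0 = top then 0 else 1 / enn2real p0)
      + \<theta> * (if p1 = top then 0 else 1 / enn2real p1)"
    using interpolated_inverse(2)[OF \<theta> p0 p1 p] pfin by (simp add: enn2real_inverse)
  consider "p0 = top" "p1 \<noteq> top" | "p0 \<noteq> top" "p1 = top" | "p0 \<noteq> top" "p1 \<noteq> top"
    using exps P by fastforce
  then show ?thesis
  proof cases
    case 1
    then have "\<theta> * enn2real p = enn2real p1" using exps P by (simp add: field_simps)
    then show ?thesis
      using Lp_qnorm_Holder_top_left[OF F G \<theta> \<open>0 < p\<close> pfin \<open>p1 \<noteq> top\<close>] 1 by (simp add: Lp_qnorm_top)
  next
    case 2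
    then have "(1 - \<theta>) * enn2real p = enn2real p0" using exps P \<theta> by (simp add: field_simps)
    then show ?thesis
      using Lp_qnorm_Holder_top_left[OF G F _ _ \<open>0 < p\<close> pfin \<open>p0 \<noteq> top\<close>, of "1 - \<theta>"] \<theta> 2
      by (simp add: Lp_qnorm_top mult.commute)
  next
    case 3
    then show ?thesis
      using Lp_qnorm_Holder_finite[OF F G \<theta> pfin _ _ \<open>0 < p\<close> p0 p1] exps by simp
  qed
qed

section \<open>Separated sets in doubling metric measure spaces\<close>

definition separated :: "real \<Rightarrow> 'a::metric_space set \<Rightarrow> bool" where
  "separated r S \<longleftrightarrow> (\<forall>a\<in>S. \<forall>b\<in>S. a \<noteq> b \<longrightarrow> r \<le> dist a b)"

lemma separated_disjoint_balls:
  assumes "separated r S"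
  shows "disjoint_family_on (\<lambda>a. ball a (r / 2)) S"
  unfolding disjoint_family_on_def
proof (intro ballI impI equals0I)
  fix a b y assume "a \<in> S" "b \<in> S" "a \<noteq> b" and "y \<in> ball a (r / 2) \<inter> ball b (r / 2)"
  then have "r \<le> dist a b" "dist a y < r / 2" "dist b y < r / 2"
    using assms by (auto simp: separated_def)
  then show False using dist_triangle3[of a b y] by (simp add: dist_commute)
qed

locale doubling_measure =
  fixes \<mu> :: "'a::metric_space measure" and c :: real
  assumes sets_eq_borel: "sets \<mu> = sets borel"
    and emeasure_ball_pos: "\<And>\<xi> r. r > 0 \<Longrightarrow> 0 < emeasure \<mu> (ball \<xi> r)"
    and emeasure_ball_finite: "\<And>\<xi> r. r > 0 \<Longrightarrow> emeasure \<mu> (ball \<xi> r) < top"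
    and doubling: "\<And>\<xi> r. r > 0 \<Longrightarrow> emeasure \<mu> (ball \<xi> (2 * r)) \<le> ennreal c * emeasure \<mu> (ball \<xi> r)"
begin

lemma ball_sets [measurable]: "ball \<xi> r \<in> sets \<mu>"
  using sets_eq_borel by simp

lemma one_le_doubling_const: "1 \<le> c"
proof -
  fix \<xi> :: 'a
  define M where "M = emeasure \<mu> (ball \<xi> 1)"
  have "M * 1 \<le> emeasure \<mu> (ball \<xi> (2 * 1))"
    unfolding M_def mult_1_right by (intro emeasure_mono subset_ball) auto
  also have "\<dots> \<le> M * ennreal c"
    using doubling[of 1 \<xi>] by (simp add: M_def mult.commute)
  finally have "1 \<le> ennreal c"
    using emeasure_ball_pos[of 1 \<xi>] emeasure_ball_finite[of 1 \<xi>]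
    by (subst (asm) ennreal_mult_le_mult_iff) (auto simp: M_def)
  then show ?thesis by simp
qed

lemma emeasure_ball_pow2_le:
  "r > 0 \<Longrightarrow> emeasure \<mu> (ball \<xi> (2 ^ m * r)) \<le> ennreal (c ^ m) * emeasure \<mu> (ball \<xi> r)"
proof (induction m)
  case (Suc m)
  have "emeasure \<mu> (ball \<xi> (2 ^ Suc m * r)) \<le> ennreal c * emeasure \<mu> (ball \<xi> (2 ^ m * r))"
    using doubling[of "2 ^ m * r" \<xi>] Suc.prems by (simp add: mult.assoc)
  also have "\<dots> \<le> ennreal c * (ennreal (c ^ m) * emeasure \<mu> (ball \<xi> r))"
    using Suc by (intro mult_left_mono) auto
  finally show ?case
    using one_le_doubling_const by (simp add: ennreal_mult mult.assoc)
qed simp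

lemma sum_emeasure_separated_balls_le:
  fixes S :: "'a set"
  assumes S: "separated r S" and F: "finite F" "F \<subseteq> S \<inter> ball z R"
  shows "(\<Sum>a\<in>F. emeasure \<mu> (ball a (r / 2))) \<le> emeasure \<mu> (ball z (R + r / 2))"
proof -
  have "(\<Sum>a\<in>F. emeasure \<mu> (ball a (r / 2))) = emeasure \<mu> (\<Union>a\<in>F. ball a (r / 2))"
    using separated_disjoint_balls[OF S] F by (intro sum_emeasure) (auto intro: disjoint_family_on_mono)
  also have "(\<Union>a\<in>F. ball a (r / 2)) \<subseteq> ball z (R + r / 2)"
  proof safe
    fix a x assume "a \<in> F" "x \<in> ball a (r / 2)"
    then show "x \<in> ball z (R + r / 2)" using F dist_triangle[of z x a] by auto
  qed
  then have "emeasure \<mu> (\<Union>a\<in>F. ball a (r / 2)) \<le> emeasure \<mu> (ball z (R + r / 2))"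
    by (intro emeasure_mono) auto
  finally show ?thesis .
qed

lemma card_separated_subset_ball_le:
  fixes S :: "'a set"
  assumes S: "separated r S" and "0 < r" "0 < R"
    and m: "2 * R + r / 2 \<le> 2 ^ m * (r / 2)"
    and F: "finite F" "F \<subseteq> S \<inter> ball z R"
  shows "real (card F) \<le> c ^ m"
proof -
  define M where "M = emeasure \<mu> (ball z (R + r / 2))"
  have ball_le: "M \<le> ennreal (c ^ m) * emeasure \<mu> (ball a (r / 2))" if "a \<in> F" for a
  proof -
    have "ball z (R + r / 2) \<subseteq> ball a (2 ^ m * (r / 2))"
    proof
      fix x assume "x \<in> ball z (R + r / 2)"
      moreover have "dist z a < R" using that F by auto
      ultimately show "x \<in> ball a (2 ^ m * (r / 2))"
        using m dist_triangle[of a x z] by (simp add: dist_commute)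
    qed
    then have "M \<le> emeasure \<mu> (ball a (2 ^ m * (r / 2)))"
      unfolding M_def by (intro emeasure_mono) auto
    also have "\<dots> \<le> ennreal (c ^ m) * emeasure \<mu> (ball a (r / 2))"
      using \<open>0 < r\<close> by (intro emeasure_ball_pow2_le) simp
    finally show ?thesis .
  qed
  have "M * ennreal (real (card F)) = (\<Sum>a\<in>F. M)"
    by (simp add: ennreal_of_nat_eq_real_of_nat mult.commute)
  also have "\<dots> \<le> ennreal (c ^ m) * (\<Sum>a\<in>F. emeasure \<mu> (ball a (r / 2)))"
    using sum_mono[OF ball_le] by (simp add: sum_distrib_left)
  also have "\<dots> \<le> ennreal (c ^ m) * M"
    unfolding M_def using sum_emeasure_separated_balls_le[OF S F] by (rule mult_left_mono) simp
  finally have "M * ennreal (real (card F)) \<le> M * ennreal (c ^ m)"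
    by (simp only: mult.commute)
  then have "ennreal (real (card F)) \<le> ennreal (c ^ m)"
    using emeasure_ball_pos[of "R + r / 2" z] emeasure_ball_finite[of "R + r / 2" z] \<open>0 < r\<close> \<open>0 < R\<close>
    by (subst (asm) ennreal_mult_le_mult_iff) (simp_all add: M_def)
  then show ?thesis
    using one_le_doubling_const by simp
qed

lemma finite_separated_inter_ball:
  fixes S :: "'a set"
  assumes S: "separated r S" and "0 < r" "0 < R" and m: "2 * R + r / 2 \<le> 2 ^ m * (r / 2)"
  shows "finite (S \<inter> ball z R)" and "real (card (S \<inter> ball z R)) \<le> c ^ m"
proof -
  show fin: "finite (S \<inter> ball z R)"
  proof (rule ccontr)
    assume "infinite (S \<inter> ball z R)"
    then obtain F where "finite F" "card F = nat \<lceil>c ^ m\<rceil> + 1" "F \<subseteq> S \<inter> ball z R"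
      using infinite_arbitrarily_large by blast
    then have "real (nat \<lceil>c ^ m\<rceil> + 1) \<le> c ^ m"
      using card_separated_subset_ball_le[OF assms] by metis
    then show False using real_nat_ceiling_ge[of "c ^ m"] by linarith
  qed
  show "real (card (S \<inter> ball z R)) \<le> c ^ m"
    using card_separated_subset_ball_le[OF assms fin order_refl] .
qed

lemma countable_separated:
  fixes S :: "'a set"
  assumes S: "separated r S" and "0 < r"
  shows "countable S"
proof -
  fix z :: 'a
  have "finite (S \<inter> ball z (real (Suc n)))" for n
  proof -
    obtain m :: nat where "(2 * real (Suc n) + r / 2) / (r / 2) < 2 ^ m"
      using real_arch_pow[of 2] by auto
    then have "2 * real (Suc n) + r / 2 \<le> 2 ^ m * (r / 2)"
      using \<open>0 < r\<close> by (simp add: divide_less_eq)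
    then show ?thesis using finite_separated_inter_ball(1)[OF S \<open>0 < r\<close>] by simp
  qed
  moreover have "S = (\<Union>n. S \<inter> ball z (real (Suc n)))"
  proof (intro equalityI subsetI)
    fix x assume "x \<in> S"
    obtain n :: nat where "dist z x < n" using reals_Archimedean2 by blast
    then show "x \<in> (\<Union>n. S \<inter> ball z (real (Suc n)))"
      using \<open>x \<in> S\<close> by (intro UN_I[of n]) auto
  qed auto
  ultimately show ?thesis
    by (metis countable_UN countableI_type countable_finite)
qed

end

section \<open>Level functions of the hyperbolic filling\<close>

lemma level_le_I_qnorm:
  "0 < q \<Longrightarrow> ennreal (2 powr (real_of_int k * s)) * Lp_qnorm \<mu> p (level_fun Xs u k) \<le> I_qnorm \<mu> Xs s p q u"
  unfolding I_qnorm_def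
  by (rule le_lq_qnorm[where a = "\<lambda>k. ennreal (2 powr (real_of_int k * s)) * Lp_qnorm \<mu> p (level_fun Xs u k)"])

lemma I_qnorm_zero: "I_qnorm \<mu> Xs s p q (\<lambda>_. 0) = 0"
proof -
  have "level_fun Xs (\<lambda>_. 0) k = (\<lambda>_. 0)" for k
    by (simp add: level_fun_def fun_eq_iff)
  then show ?thesis by (simp add: I_qnorm_def Lp_qnorm_zero lq_qnorm_eq_Lp_qnorm)
qed

lemma powr_weight_interpolation:
  assumes "s = (1 - \<theta>) * s0 + \<theta> * s1"
  shows "ennreal (2 powr (real_of_int k * s))
    = epow (ennreal (2 powr (real_of_int k * s0))) (1 - \<theta>) * epow (ennreal (2 powr (real_of_int k * s1))) \<theta>"
proof -
  have "(2::real) powr (real_of_int k * s) = 2 powr (real_of_int k * s0 * (1 - \<theta>) + real_of_int k * s1 * \<theta>)"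
    by (simp add: assms algebra_simps)
  then show ?thesis by (simp add: powr_add powr_powr epow_ennreal ennreal_mult)
qed

lemma level_fun_le_interpolation:
  assumes \<theta>: "0 < \<theta>" "\<theta> < 1" and "0 \<le> C"
    and u: "\<forall>x\<in>hf_vertices Xs. norm (u x) \<le> C * norm (g x) powr (1 - \<theta>) * norm (h x) powr \<theta>"
  shows "level_fun Xs u k z
    \<le> ennreal C * (epow (level_fun Xs g k z) (1 - \<theta>) * epow (level_fun Xs h k z) \<theta>)"
proof -
  define G H where "G \<xi> = ennreal (norm (g (k, \<xi>))) * indicator (hf_ball (k, \<xi>)) z"
    and "H \<xi> = ennreal (norm (h (k, \<xi>))) * indicator (hf_ball (k, \<xi>)) z" for \<xi>
  have "ennreal (norm (u (k, \<xi>))) * indicator (hf_ball (k, \<xi>)) z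
      \<le> ennreal C * (epow (G \<xi>) (1 - \<theta>) * epow (H \<xi>) \<theta>)" if "\<xi> \<in> Xs k" for \<xi>
  proof (cases "z \<in> hf_ball (k, \<xi>)")
    case True
    have "norm (u (k, \<xi>)) \<le> C * norm (g (k, \<xi>)) powr (1 - \<theta>) * norm (h (k, \<xi>)) powr \<theta>"
      using u that by (simp add: hf_vertices_def)
    then show ?thesis
      using True \<open>0 \<le> C\<close> by (simp add: G_def H_def epow_ennreal mult.assoc flip: ennreal_mult)
  qed simp
  then have "level_fun Xs u k z \<le> ennreal C * (\<integral>\<^sup>+\<xi>. epow (G \<xi>) (1 - \<theta>) * epow (H \<xi>) \<theta> \<partial>count_space (Xs k))"
    unfolding level_fun_def by (subst nn_integral_cmult[symmetric]) (auto intro: nn_integral_mono)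
  also have "\<dots> \<le> ennreal C * (epow (Lp_qnorm (count_space (Xs k)) 1 G) (1 - \<theta>)
      * epow (Lp_qnorm (count_space (Xs k)) 1 H) \<theta>)"
    using Lp_qnorm_Holder[of G "count_space (Xs k)" H \<theta> 1 1 1] \<theta>
    by (intro mult_left_mono) (simp_all add: Lp_qnorm_finite flip: ennreal_plus)
  finally show ?thesis
    by (simp add: Lp_qnorm_finite G_def H_def level_fun_def)
qed

locale doubling_filling = doubling_measure \<mu> c for \<mu> :: "'a::metric_space measure" and c +
  fixes Xs :: "int \<Rightarrow> 'a set"
  assumes filling: "hyperbolic_filling Xs"
begin

lemma separated_level: "separated (2 powr (- real_of_int k - 1)) (Xs k)"
  using filling by (simp add: hyperbolic_filling_def maximal_separated_def separated_def)

lemma countable_level: "countable (Xs k)"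
  by (rule countable_separated[OF separated_level]) simp

lemma
  shows finite_level_inter_ball: "finite (Xs k \<inter> ball z (2 powr (- real_of_int k)))"
    and card_level_inter_ball_le: "real (card (Xs k \<inter> ball z (2 powr (- real_of_int k)))) \<le> c ^ 4"
proof -
  define r where "r = 2 powr (- real_of_int k - 1)"
  have "2 powr (- real_of_int k) = 2 * r"
    by (simp add: r_def powr_diff)
  moreover have "0 < r" "0 < 2 * r" "2 * (2 * r) + r / 2 \<le> 2 ^ 4 * (r / 2)"
    by (simp_all add: r_def)
  ultimately show "finite (Xs k \<inter> ball z (2 powr (- real_of_int k)))"
    and "real (card (Xs k \<inter> ball z (2 powr (- real_of_int k)))) \<le> c ^ 4"
    using finite_separated_inter_ball[OF separated_level[of k, folded r_def], of "2 * r" 4 z] by simp_all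
qed

lemma level_fun_eq_sum:
  "level_fun Xs u k z = (\<Sum>\<xi>\<in>Xs k \<inter> ball z (2 powr (- real_of_int k)). ennreal (norm (u (k, \<xi>))))"
proof -
  have "level_fun Xs u k z = (\<Sum>\<xi>\<in>Xs k \<inter> ball z (2 powr (- real_of_int k)).
      ennreal (norm (u (k, \<xi>))) * indicator (hf_ball (k, \<xi>)) z)"
    unfolding level_fun_def using finite_level_inter_ball
    by (intro nn_integral_count_space') (auto simp: hf_ball_def dist_commute)
  also have "\<dots> = (\<Sum>\<xi>\<in>Xs k \<inter> ball z (2 powr (- real_of_int k)). ennreal (norm (u (k, \<xi>))))"
    by (intro sum.cong) (auto simp: hf_ball_def dist_commute)
  finally show ?thesis .
qed

lemma level_fun_measurable [measurable]: "level_fun Xs u k \<in> borel_measurable \<mu>"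
proof -
  interpret sigma_finite_measure "count_space (Xs k)"
    by (rule sigma_finite_measure_count_space_countable[OF countable_level])
  have "(\<lambda>y. ennreal (norm (u (k, snd y))) * indicator (hf_ball (k, snd y)) (fst y))
      \<in> borel_measurable (\<mu> \<Otimes>\<^sub>M count_space (Xs k))"
  proof (rule measurable_compose_countable'[where g = snd and I = "Xs k"
        and f = "\<lambda>\<xi> y. ennreal (norm (u (k, \<xi>))) * indicator (hf_ball (k, \<xi>)) (fst y)"])
    fix \<xi>
    have [measurable]: "hf_ball (k, \<xi>) \<in> sets \<mu>" by (simp add: hf_ball_def)
    show "(\<lambda>y. ennreal (norm (u (k, \<xi>))) * indicator (hf_ball (k, \<xi>)) (fst y))
      \<in> borel_measurable (\<mu> \<Otimes>\<^sub>M count_space (Xs k))"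
      by measurable
  qed (auto simp: countable_level)
  then show ?thesis
    unfolding level_fun_def by (intro borel_measurable_nn_integral) (simp add: case_prod_beta)
qed

lemma Lp_qnorm_level_fun_neq_0:
  assumes "0 < p" and "\<xi> \<in> Xs k" and "u (k, \<xi>) \<noteq> 0"
  shows "Lp_qnorm \<mu> p (level_fun Xs u k) \<noteq> 0"
proof
  define B where "B = ball \<xi> (2 powr (- real_of_int k))"
  assume "Lp_qnorm \<mu> p (level_fun Xs u k) = 0"
  then have "AE z in \<mu>. level_fun Xs u k z = 0"
    by (rule AE_eq_0_if_Lp_qnorm_eq_0[OF level_fun_measurable \<open>0 < p\<close>])
  moreover have "level_fun Xs u k z \<noteq> 0" if "z \<in> B" for z
  proof -
    have "ennreal (norm (u (k, \<xi>))) \<le> level_fun Xs u k z"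
      unfolding level_fun_eq_sum using that assms(2)
      by (intro member_le_sum finite_level_inter_ball) (auto simp: B_def dist_commute)
    then show ?thesis using assms(3) by auto
  qed
  ultimately have "AE z in \<mu>. z \<notin> B"
    by (auto elim: eventually_mono)
  moreover have "B \<subseteq> space \<mu>"
    using sets.sets_into_space[of B \<mu>] by (simp add: B_def)
  ultimately have "emeasure \<mu> B = 0"
    by (subst (asm) AE_iff_measurable[of B]) (auto simp: B_def)
  then show False
    using emeasure_ball_pos[of "2 powr (- real_of_int k)" \<xi>] by (simp add: B_def)
qed

end

section \<open>Factorisation by powers of \<open>u\<close>\<close>

lemma sum_powr_le_card_mult_powr_sum:
  assumes "finite F" and "\<And>i. i \<in> F \<Longrightarrow> 0 \<le> a i" and "0 \<le> r"
  shows "(\<Sum>i\<in>F. a i powr r) \<le> real (card F) * sum a F powr r"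
proof -
  have "(\<Sum>i\<in>F. a i powr r) \<le> (\<Sum>i\<in>F. sum a F powr r)"
    using assms by (intro sum_mono powr_mono2 member_le_sum) auto
  then show ?thesis by simp
qed

definition power_factor :: "(int \<Rightarrow> 'a set) \<Rightarrow> (int \<times> 'a \<Rightarrow> complex) \<Rightarrow> real \<Rightarrow> (int \<Rightarrow> real)
    \<Rightarrow> int \<times> 'a \<Rightarrow> complex" where
  "power_factor Xs u \<alpha> w x =
     (if x \<in> hf_vertices Xs then complex_of_real (norm (u x) powr \<alpha> * w (fst x)) else 0)"

lemma power_factor_hf_funs: "power_factor Xs u \<alpha> w \<in> hf_funs Xs"
  by (simp add: power_factor_def hf_funs_def)

lemma norm_power_factor:
  "x \<in> hf_vertices Xs \<Longrightarrow> 0 \<le> w (fst x) \<Longrightarrow> norm (power_factor Xs u \<alpha> w x) = norm (u x) powr \<alpha> * w (fst x)"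
  by (simp add: power_factor_def abs_of_nonneg del: of_real_mult)

(* A k will be the L^p norm of level k of u and b k = 2^(ks) A k / \<Lambda>; as x / 0 = 0, the weight
   vanishes on the levels where u does *)
definition calderon_weight :: "(int \<Rightarrow> real) \<Rightarrow> (int \<Rightarrow> real) \<Rightarrow> real \<Rightarrow> real \<Rightarrow> real \<Rightarrow> real
    \<Rightarrow> int \<Rightarrow> real" where
  "calderon_weight A b K \<alpha> \<gamma> t k = b k powr \<gamma> * 2 powr (- (real_of_int k * t)) / (K * A k powr \<alpha>)"

lemma powr_interpolation_identity:
  fixes N A b K \<theta> \<alpha> \<beta> \<gamma>0 \<gamma>1 t0 t1 :: real
  assumes pos: "0 < N" "0 < A" "0 < b" "0 < K"
    and ab: "(1 - \<theta>) * \<alpha> + \<theta> * \<beta> = 1" and \<gamma>: "(1 - \<theta>) * \<gamma>0 + \<theta> * \<gamma>1 = 1"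
  shows "(N powr \<alpha> * (b powr \<gamma>0 * 2 powr (- t0) / (K * A powr \<alpha>))) powr (1 - \<theta>)
      * (N powr \<beta> * (b powr \<gamma>1 * 2 powr (- t1) / (K * A powr \<beta>))) powr \<theta>
    = N * b * 2 powr (- ((1 - \<theta>) * t0 + \<theta> * t1)) / (K * A)"
    (is "?L = ?R")
proof -
  have "ln ?L = ((1 - \<theta>) * \<alpha> + \<theta> * \<beta>) * (ln N - ln A) + ((1 - \<theta>) * \<gamma>0 + \<theta> * \<gamma>1) * ln b
      - ((1 - \<theta>) * t0 + \<theta> * t1) * ln 2 - ((1 - \<theta>) + \<theta>) * ln K"
    using pos by (simp add: ln_mult ln_div algebra_simps)
  also have "\<dots> = ln ?R"
    unfolding ab \<gamma> using pos by (simp add: ln_mult ln_div algebra_simps)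
  finally show ?thesis
    using pos by simp
qed

context doubling_filling
begin

lemma level_fun_power_factor_le:
  assumes "0 \<le> \<alpha>" and "0 \<le> w k"
  shows "level_fun Xs (power_factor Xs u \<alpha> w) k z \<le> ennreal (c ^ 4 * w k) * epow (level_fun Xs u k z) \<alpha>"
proof -
  define F where "F = Xs k \<inter> ball z (2 powr (- real_of_int k))"
  have F: "finite F" "real (card F) \<le> c ^ 4"
    using finite_level_inter_ball card_level_inter_ball_le by (simp_all add: F_def)
  have "level_fun Xs (power_factor Xs u \<alpha> w) k z = ennreal (w k * (\<Sum>\<xi>\<in>F. norm (u (k, \<xi>)) powr \<alpha>))"
    unfolding level_fun_eq_sum F_def[symmetric] using \<open>0 \<le> w k\<close>
    by (simp add: F_def power_factor_def hf_vertices_def sum_distrib_left norm_mult abs_of_nonneg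
        mult.commute flip: sum_ennreal)
  also have "\<dots> \<le> ennreal (w k * (c ^ 4 * (\<Sum>\<xi>\<in>F. norm (u (k, \<xi>))) powr \<alpha>))"
  proof -
    have "(\<Sum>\<xi>\<in>F. norm (u (k, \<xi>)) powr \<alpha>) \<le> real (card F) * (\<Sum>\<xi>\<in>F. norm (u (k, \<xi>))) powr \<alpha>"
      using \<open>0 \<le> \<alpha>\<close> by (intro sum_powr_le_card_mult_powr_sum F) auto
    also have "\<dots> \<le> c ^ 4 * (\<Sum>\<xi>\<in>F. norm (u (k, \<xi>))) powr \<alpha>"
      by (intro mult_right_mono F) simp
    finally show ?thesis
      using \<open>0 \<le> w k\<close> by (intro ennreal_leI mult_left_mono)
  qed
  also have "\<dots> = ennreal (c ^ 4 * w k) * epow (ennreal (\<Sum>\<xi>\<in>F. norm (u (k, \<xi>)))) \<alpha>"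
    using \<open>0 \<le> w k\<close> one_le_doubling_const
    by (simp add: epow_ennreal sum_nonneg mult_ac flip: ennreal_mult)
  also have "ennreal (\<Sum>\<xi>\<in>F. norm (u (k, \<xi>))) = level_fun Xs u k z"
    unfolding level_fun_eq_sum F_def[symmetric] by (simp add: sum_ennreal)
  finally show ?thesis .
qed

lemma I_qnorm_power_factor_le:
  assumes p: "0 < p0" "0 < p" "p = top \<Longrightarrow> p0 = top" and q: "0 < q0" "0 < q" "q = top \<Longrightarrow> q0 = top"
    and A: "\<And>k. Lp_qnorm \<mu> p (level_fun Xs u k) = ennreal (A k)" "\<And>k. 0 \<le> A k"
    and w: "\<And>k. 0 \<le> w k" and b: "\<And>k. 0 \<le> b k" "lq_qnorm q (\<lambda>k. ennreal (b k)) \<le> 1"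
    and weight: "\<And>k. c ^ 4 * (2 powr (real_of_int k * s0) * w k * A k powr exponent_ratio p p0)
      \<le> b k powr exponent_ratio q q0"
  shows "I_qnorm \<mu> Xs s0 p0 q0 (power_factor Xs u (exponent_ratio p p0) w) \<le> 1"
proof -
  define \<alpha> \<gamma> where "\<alpha> = exponent_ratio p p0" and "\<gamma> = exponent_ratio q q0"
  have level_bound: "ennreal (2 powr (real_of_int k * s0))
      * Lp_qnorm \<mu> p0 (level_fun Xs (power_factor Xs u \<alpha> w) k) \<le> epow (ennreal (b k)) \<gamma>" for k
  proof -
    have "Lp_qnorm \<mu> p0 (level_fun Xs (power_factor Xs u \<alpha> w) k)
        \<le> Lp_qnorm \<mu> p0 (\<lambda>z. ennreal (c ^ 4 * w k) * epow (level_fun Xs u k z) \<alpha>)"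
      by (intro Lp_qnorm_mono level_fun_power_factor_le w) (simp add: \<alpha>_def exponent_ratio_nonneg)
    also have "\<dots> \<le> ennreal (c ^ 4 * w k) * epow (ennreal (A k)) \<alpha>"
      using p w one_le_doubling_const unfolding \<alpha>_def A(1)[symmetric]
      by (intro Lp_qnorm_cmult[THEN order_trans] mult_left_mono Lp_qnorm_epow) simp_all
    finally have "ennreal (2 powr (real_of_int k * s0)) * Lp_qnorm \<mu> p0 (level_fun Xs (power_factor Xs u \<alpha> w) k)
        \<le> ennreal (2 powr (real_of_int k * s0)) * (ennreal (c ^ 4 * w k) * epow (ennreal (A k)) \<alpha>)"
      by (rule mult_left_mono) simp
    also have "\<dots> = ennreal (c ^ 4 * (2 powr (real_of_int k * s0) * w k * A k powr \<alpha>))"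
      using w[of k] A(2)[of k] one_le_doubling_const by (simp add: epow_ennreal mult_ac flip: ennreal_mult)
    also have "\<dots> \<le> epow (ennreal (b k)) \<gamma>"
      using weight[of k] b(1)[of k] by (simp add: epow_ennreal \<alpha>_def \<gamma>_def)
    finally show ?thesis .
  qed
  have "I_qnorm \<mu> Xs s0 p0 q0 (power_factor Xs u \<alpha> w) \<le> lq_qnorm q0 (\<lambda>k. epow (ennreal (b k)) \<gamma>)"
    unfolding I_qnorm_def lq_qnorm_eq_Lp_qnorm by (rule Lp_qnorm_mono) (rule level_bound)
  also have "\<dots> \<le> epow (lq_qnorm q (\<lambda>k. ennreal (b k))) \<gamma>"
    unfolding lq_qnorm_eq_Lp_qnorm \<gamma>_def using q by (intro Lp_qnorm_epow) simp_all
  also have "\<dots> \<le> 1"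
    using b(2) by (intro epow_le_one) (simp_all add: \<gamma>_def exponent_ratio_nonneg)
  finally show ?thesis by (simp add: \<alpha>_def)
qed

lemma I_qnorm_calderon_factor_le:
  assumes p: "0 < p0" "0 < p" "p = top \<Longrightarrow> p0 = top" and q: "0 < q0" "0 < q" "q = top \<Longrightarrow> q0 = top"
    and A: "\<And>k. Lp_qnorm \<mu> p (level_fun Xs u k) = ennreal (A k)" "\<And>k. 0 \<le> A k"
    and b: "\<And>k. 0 \<le> b k" "lq_qnorm q (\<lambda>k. ennreal (b k)) \<le> 1"
  shows "I_qnorm \<mu> Xs s0 p0 q0 (power_factor Xs u (exponent_ratio p p0)
    (calderon_weight A b (c ^ 4) (exponent_ratio p p0) (exponent_ratio q q0) s0)) \<le> 1"
proof (rule I_qnorm_power_factor_le[OF p q A _ b])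
  fix k
  have "0 < c ^ 4" using one_le_doubling_const by simp
  then show "0 \<le> calderon_weight A b (c ^ 4) (exponent_ratio p p0) (exponent_ratio q q0) s0 k"
    and "c ^ 4 * (2 powr (real_of_int k * s0)
      * calderon_weight A b (c ^ 4) (exponent_ratio p p0) (exponent_ratio q q0) s0 k
      * A k powr exponent_ratio p p0) \<le> b k powr exponent_ratio q q0"
    by (cases "A k = 0") (simp_all add: calderon_weight_def powr_minus field_simps)
qed

end

section \<open>Interpolation of the spaces \<open>\<I>\<^sup>s\<^sub>p\<^sub>,\<^sub>q\<close>\<close>

locale interpolation_exponents =
  fixes \<theta> s0 s1 s :: real and p0 p1 p q0 q1 q :: ennreal
  assumes \<theta>: "0 < \<theta>" "\<theta> < 1"
    and p0: "0 < p0" and p1: "0 < p1" and q0: "0 < q0" and q1: "0 < q1"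
    and p_def: "inverse p = ennreal (1 - \<theta>) * inverse p0 + ennreal \<theta> * inverse p1"
    and q_def: "inverse q = ennreal (1 - \<theta>) * inverse q0 + ennreal \<theta> * inverse q1"
    and s_def: "s = (1 - \<theta>) * s0 + \<theta> * s1"
begin

lemma p_pos: "0 < p" and q_pos: "0 < q"
  and p_top: "p = top \<Longrightarrow> p0 = top \<and> p1 = top" and q_top: "q = top \<Longrightarrow> q0 = top \<and> q1 = top"
  using interpolated_inverse[OF \<theta> p0 p1 p_def] interpolated_inverse[OF \<theta> q0 q1 q_def] by auto

lemma power_factors_interpolate:
  assumes x: "x \<in> hf_vertices Xs" and "u x \<noteq> 0" and pos: "0 < A (fst x)" "0 < \<Lambda>" "0 < K"
    and b: "\<And>k. b k = 2 powr (real_of_int k * s) * A k / \<Lambda>"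
  shows "norm (u x) = K * \<Lambda>
    * norm (power_factor Xs u (exponent_ratio p p0)
        (calderon_weight A b K (exponent_ratio p p0) (exponent_ratio q q0) s0) x) powr (1 - \<theta>)
    * norm (power_factor Xs u (exponent_ratio p p1)
        (calderon_weight A b K (exponent_ratio p p1) (exponent_ratio q q1) s1) x) powr \<theta>"
proof -
  obtain k \<xi> where k: "x = (k, \<xi>)" by (cases x)
  define t where "t = (1 - \<theta>) * (real_of_int k * s0) + \<theta> * (real_of_int k * s1)"
  have "0 < b k" using pos b[of k] by (simp add: k)
  then have w: "0 \<le> calderon_weight A b K \<alpha> \<gamma> t' k" for \<alpha> \<gamma> t'
    using pos k by (simp add: calderon_weight_def)
  have "norm (power_factor Xs u (exponent_ratio p p0)
        (calderon_weight A b K (exponent_ratio p p0) (exponent_ratio q q0) s0) x) powr (1 - \<theta>)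
      * norm (power_factor Xs u (exponent_ratio p p1)
        (calderon_weight A b K (exponent_ratio p p1) (exponent_ratio q q1) s1) x) powr \<theta>
      = (norm (u x) powr exponent_ratio p p0
          * calderon_weight A b K (exponent_ratio p p0) (exponent_ratio q q0) s0 k) powr (1 - \<theta>)
      * (norm (u x) powr exponent_ratio p p1
          * calderon_weight A b K (exponent_ratio p p1) (exponent_ratio q q1) s1 k) powr \<theta>"
    using x w by (simp add: k norm_power_factor)
  also have "\<dots> = norm (u x) * b k * 2 powr (- t) / (K * A k)"
    unfolding calderon_weight_def t_def using pos k \<open>u x \<noteq> 0\<close> \<open>0 < b k\<close>
    by (intro powr_interpolation_identity exponent_ratio_interpolation \<theta> p0 p1 q0 q1 p_def q_def) simp_all
  also have "\<dots> = norm (u x) / (K * \<Lambda>)"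
  proof -
    have "b k * 2 powr (- t) = A k / \<Lambda>"
      using b[of k] by (simp add: t_def s_def algebra_simps flip: powr_add)
    then show ?thesis using pos k by (simp add: mult.assoc)
  qed
  finally show ?thesis
    using pos by (simp add: field_simps)
qed

end

locale calderon_filling = doubling_filling \<mu> c Xs + interpolation_exponents \<theta> s0 s1 s p0 p1 p q0 q1 q
  for \<mu> :: "'a::metric_space measure" and c Xs \<theta> s0 s1 s p0 p1 p q0 q1 q
begin

lemma I_qnorm_le_if_factorization:
  assumes "0 \<le> C" and g: "I_qnorm \<mu> Xs s0 p0 q0 g \<le> 1" and h: "I_qnorm \<mu> Xs s1 p1 q1 h \<le> 1"
    and u: "\<forall>x\<in>hf_vertices Xs. norm (u x) \<le> C * norm (g x) powr (1 - \<theta>) * norm (h x) powr \<theta>"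
  shows "I_qnorm \<mu> Xs s p q u \<le> ennreal C"
proof -
  define B0 B1 where "B0 k = ennreal (2 powr (real_of_int k * s0)) * Lp_qnorm \<mu> p0 (level_fun Xs g k)"
    and "B1 k = ennreal (2 powr (real_of_int k * s1)) * Lp_qnorm \<mu> p1 (level_fun Xs h k)" for k
  have "Lp_qnorm \<mu> p (level_fun Xs u k) \<le> Lp_qnorm \<mu> p (\<lambda>z. ennreal C
      * (epow (level_fun Xs g k z) (1 - \<theta>) * epow (level_fun Xs h k z) \<theta>))" for k
    by (intro Lp_qnorm_mono level_fun_le_interpolation[OF \<theta> \<open>0 \<le> C\<close> u])
  also have "\<dots> k \<le> ennreal C * (epow (Lp_qnorm \<mu> p0 (level_fun Xs g k)) (1 - \<theta>)
      * epow (Lp_qnorm \<mu> p1 (level_fun Xs h k)) \<theta>)" for k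
    using \<open>0 \<le> C\<close> p_pos
    by (intro Lp_qnorm_cmult[THEN order_trans] mult_left_mono Lp_qnorm_Holder[OF _ _ \<theta> p0 p1 p_def]) simp_all
  finally have "ennreal (2 powr (real_of_int k * s)) * Lp_qnorm \<mu> p (level_fun Xs u k)
      \<le> ennreal C * (epow (B0 k) (1 - \<theta>) * epow (B1 k) \<theta>)" for k
    unfolding powr_weight_interpolation[OF s_def] B0_def B1_def epow_mult
    by (rule mult_left_mono[THEN order_trans]) (simp_all add: ac_simps)
  then have "I_qnorm \<mu> Xs s p q u \<le> lq_qnorm q (\<lambda>k. ennreal C * (epow (B0 k) (1 - \<theta>) * epow (B1 k) \<theta>))"
    unfolding I_qnorm_def lq_qnorm_eq_Lp_qnorm by (rule Lp_qnorm_mono)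
  also have "\<dots> \<le> ennreal C * (epow (lq_qnorm q0 B0) (1 - \<theta>) * epow (lq_qnorm q1 B1) \<theta>)"
    unfolding lq_qnorm_eq_Lp_qnorm using \<open>0 \<le> C\<close> q_pos
    by (intro Lp_qnorm_cmult[THEN order_trans] mult_left_mono Lp_qnorm_Holder[OF _ _ \<theta> q0 q1 q_def]) simp_all
  also have "\<dots> \<le> ennreal C * (1 * 1)"
    using g h \<theta> unfolding I_qnorm_def B0_def[abs_def] B1_def[abs_def]
    by (intro mult_left_mono mult_mono epow_le_one) auto
  finally show ?thesis by simp
qed

lemma I_qnorm_le_calderon_qnorm:
  "I_qnorm \<mu> Xs s p q u \<le> calderon_qnorm Xs (I_qnorm \<mu> Xs s0 p0 q0) (I_qnorm \<mu> Xs s1 p1 q1) \<theta> u"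
  unfolding calderon_qnorm_def
  by (rule Inf_greatest) (auto intro: I_qnorm_le_if_factorization)

lemma calderon_qnorm_le_if_I_qnorm_eq:
  assumes I: "I_qnorm \<mu> Xs s p q u = ennreal \<Lambda>" and "0 < \<Lambda>"
  shows "calderon_qnorm Xs (I_qnorm \<mu> Xs s0 p0 q0) (I_qnorm \<mu> Xs s1 p1 q1) \<theta> u \<le> ennreal (c ^ 4 * \<Lambda>)"
proof -
  define A where "A k = enn2real (Lp_qnorm \<mu> p (level_fun Xs u k))" for k
  define b where "b k = 2 powr (real_of_int k * s) * A k / \<Lambda>" for k
  define g h where "g = power_factor Xs u (exponent_ratio p p0)
      (calderon_weight A b (c ^ 4) (exponent_ratio p p0) (exponent_ratio q q0) s0)"
    and "h = power_factor Xs u (exponent_ratio p p1)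
      (calderon_weight A b (c ^ 4) (exponent_ratio p p1) (exponent_ratio q q1) s1)"
  have level_norm: "Lp_qnorm \<mu> p (level_fun Xs u k) = ennreal (A k)" for k
    using level_le_I_qnorm[OF q_pos, of k s \<mu> p Xs u] I
    by (auto simp: A_def ennreal_mult_eq_top_iff ennreal_enn2real_if top_unique)
  have A_nonneg: "0 \<le> A k" for k by (simp add: A_def)
  then have b_nonneg: "0 \<le> b k" for k using \<open>0 < \<Lambda>\<close> by (simp add: b_def)
  have "ennreal (b k)
      = ennreal (1 / \<Lambda>) * (ennreal (2 powr (real_of_int k * s)) * Lp_qnorm \<mu> p (level_fun Xs u k))" for k
    unfolding level_norm b_def using \<open>0 < \<Lambda>\<close> A_nonneg[of k]
    by (simp add: mult.commute flip: ennreal_mult)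
  then have "lq_qnorm q (\<lambda>k. ennreal (b k)) \<le> ennreal (1 / \<Lambda>) * I_qnorm \<mu> Xs s p q u"
    unfolding I_qnorm_def lq_qnorm_eq_Lp_qnorm using \<open>0 < \<Lambda>\<close> q_pos
    by (simp add: Lp_qnorm_cmult)
  then have b_le: "lq_qnorm q (\<lambda>k. ennreal (b k)) \<le> 1"
    using \<open>0 < \<Lambda>\<close> by (simp add: I flip: ennreal_mult)
  note factor_le = I_qnorm_calderon_factor_le[OF _ p_pos _ _ q_pos _ level_norm A_nonneg b_nonneg b_le]
  have "I_qnorm \<mu> Xs s0 p0 q0 g \<le> 1" "I_qnorm \<mu> Xs s1 p1 q1 h \<le> 1"
    unfolding g_def h_def using p0 p1 q0 q1 p_top q_top by (auto intro: factor_le)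
  moreover have "norm (u x) \<le> c ^ 4 * \<Lambda> * norm (g x) powr (1 - \<theta>) * norm (h x) powr \<theta>"
    if x: "x \<in> hf_vertices Xs" for x
  proof (cases "u x = 0")
    case False
    obtain k \<xi> where k: "x = (k, \<xi>)" "\<xi> \<in> Xs k" using x by (cases x) (auto simp: hf_vertices_def)
    then have "A k \<noteq> 0"
      using Lp_qnorm_level_fun_neq_0[OF p_pos k(2)] False level_norm[of k] by auto
    then show ?thesis
      unfolding g_def h_def using x False A_nonneg[of k] k \<open>0 < \<Lambda>\<close> one_le_doubling_const
      by (intro eq_refl power_factors_interpolate) (simp_all add: b_def)
  qed (use \<open>0 < \<Lambda>\<close> one_le_doubling_const in simp)
  moreover have "0 < c ^ 4 * \<Lambda>" "g \<in> hf_funs Xs" "h \<in> hf_funs Xs"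
    using \<open>0 < \<Lambda>\<close> one_le_doubling_const by (simp_all add: g_def h_def power_factor_hf_funs)
  ultimately show ?thesis
    unfolding calderon_qnorm_def by (intro Inf_lower) blast
qed

lemma calderon_qnorm_eq_0_if_I_qnorm_eq_0:
  assumes I: "I_qnorm \<mu> Xs s p q u = 0"
  shows "calderon_qnorm Xs (I_qnorm \<mu> Xs s0 p0 q0) (I_qnorm \<mu> Xs s1 p1 q1) \<theta> u = 0"
proof -
  have "u x = 0" if "x \<in> hf_vertices Xs" for x
  proof (rule ccontr)
    obtain k \<xi> where x: "x = (k, \<xi>)" "\<xi> \<in> Xs k"
      using \<open>x \<in> hf_vertices Xs\<close> by (cases x) (auto simp: hf_vertices_def)
    assume "u x \<noteq> 0"
    then have "Lp_qnorm \<mu> p (level_fun Xs u k) \<noteq> 0"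
      using Lp_qnorm_level_fun_neq_0[OF p_pos x(2)] x(1) by simp
    moreover have "ennreal (2 powr (real_of_int k * s)) * Lp_qnorm \<mu> p (level_fun Xs u k) = 0"
      using level_le_I_qnorm[OF q_pos, of k s \<mu> p Xs u] I by simp
    ultimately show False by simp
  qed
  then have "calderon_qnorm Xs (I_qnorm \<mu> Xs s0 p0 q0) (I_qnorm \<mu> Xs s1 p1 q1) \<theta> u \<le> ennreal e"
    if "0 < e" for e
    unfolding calderon_qnorm_def using that
    by (intro Inf_lower) (auto intro!: exI[of _ "\<lambda>_. 0"] simp: I_qnorm_zero hf_funs_def)
  then show ?thesis
    by (metis ennreal_le_epsilon add_0 le_zero_eq)
qed

lemma calderon_qnorm_le_I_qnorm:
  "calderon_qnorm Xs (I_qnorm \<mu> Xs s0 p0 q0) (I_qnorm \<mu> Xs s1 p1 q1) \<theta> u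
    \<le> ennreal (c ^ 4) * I_qnorm \<mu> Xs s p q u"
proof -
  have "0 < c ^ 4" using one_le_doubling_const by simp
  consider "I_qnorm \<mu> Xs s p q u = top" | "I_qnorm \<mu> Xs s p q u = 0"
    | \<Lambda> where "I_qnorm \<mu> Xs s p q u = ennreal \<Lambda>" "0 < \<Lambda>"
    by (cases "I_qnorm \<mu> Xs s p q u") (auto simp: le_less)
  then show ?thesis
  proof cases
    case 1
    then show ?thesis using \<open>0 < c ^ 4\<close> by (simp add: ennreal_mult_top)
  next
    case 2
    then show ?thesis by (simp add: calderon_qnorm_eq_0_if_I_qnorm_eq_0)
  next
    case 3
    then show ?thesis
      using calderon_qnorm_le_if_I_qnorm_eq \<open>0 < c ^ 4\<close> by (simp add: ennreal_mult)
  qed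
qed

end

theorem proposition4p1:
  fixes \<mu> :: "'a::metric_space measure"
    and Xs :: "int \<Rightarrow> 'a set"
    and s0 s1 \<theta> :: real
    and p0 q0 p1 q1 p q :: ennreal
    and s :: real
  assumes space: "space \<mu> = UNIV"
    and borel: "sets \<mu> = sets borel"
    and balls: "\<And>\<xi> r. r > 0 \<Longrightarrow> 0 < emeasure \<mu> (ball \<xi> r) \<and> emeasure \<mu> (ball \<xi> r) < \<infinity>"
    and doubling: "\<exists>c::real. \<forall>\<xi> r. r > 0 \<longrightarrow>
                      emeasure \<mu> (ball \<xi> (2 * r)) \<le> ennreal c * emeasure \<mu> (ball \<xi> r)"
    and filling: "hyperbolic_filling Xs"
    and s0: "0 < s0" and s1: "0 < s1"
    and p0: "0 < p0" and q0: "0 < q0" and p1: "0 < p1" and q1: "0 < q1"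
    and \<theta>: "0 < \<theta>" "\<theta> < 1"
    and p_def: "inverse p = ennreal (1 - \<theta>) * inverse p0 + ennreal \<theta> * inverse p1"
    and q_def: "inverse q = ennreal (1 - \<theta>) * inverse q0 + ennreal \<theta> * inverse q1"
    and s_def: "s = (1 - \<theta>) * s0 + \<theta> * s1"
  shows "calderon_space Xs (I_qnorm \<mu> Xs s0 p0 q0) (I_qnorm \<mu> Xs s1 p1 q1) \<theta> = I_space \<mu> Xs s p q
       \<and> (\<exists>C::real. C > 0 \<and> (\<forall>u \<in> hf_funs Xs.
            calderon_qnorm Xs (I_qnorm \<mu> Xs s0 p0 q0) (I_qnorm \<mu> Xs s1 p1 q1) \<theta> u
               \<le> ennreal C * I_qnorm \<mu> Xs s p q u
          \<and> I_qnorm \<mu> Xs s p q u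
               \<le> ennreal C * calderon_qnorm Xs (I_qnorm \<mu> Xs s0 p0 q0) (I_qnorm \<mu> Xs s1 p1 q1) \<theta> u))"
proof -
  obtain c where c: "\<And>\<xi> r. r > 0 \<Longrightarrow> emeasure \<mu> (ball \<xi> (2 * r)) \<le> ennreal c * emeasure \<mu> (ball \<xi> r)"
    using doubling by blast
  interpret calderon_filling \<mu> c Xs \<theta> s0 s1 s p0 p1 p q0 q1 q
    by unfold_locales (use borel balls c filling \<theta> p0 q0 p1 q1 p_def q_def s_def in auto)
  define N where "N = calderon_qnorm Xs (I_qnorm \<mu> Xs s0 p0 q0) (I_qnorm \<mu> Xs s1 p1 q1) \<theta>"
  have lower: "I_qnorm \<mu> Xs s p q u \<le> ennreal (c ^ 4) * N u" for u
    using I_qnorm_le_calderon_qnorm[of u] one_le_doubling_const mult_right_mono[of 1 "ennreal (c ^ 4)" "N u"]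
    by (simp add: N_def)
  have upper: "N u \<le> ennreal (c ^ 4) * I_qnorm \<mu> Xs s p q u" for u
    unfolding N_def by (rule calderon_qnorm_le_I_qnorm)
  have "calderon_space Xs (I_qnorm \<mu> Xs s0 p0 q0) (I_qnorm \<mu> Xs s1 p1 q1) \<theta> = I_space \<mu> Xs s p q"
    unfolding calderon_space_def I_space_def N_def[symmetric]
    using le_less_trans[OF lower] le_less_trans[OF upper] by (auto simp: ennreal_mult_less_top)
  moreover have "0 < c ^ 4" using one_le_doubling_const by simp
  ultimately show ?thesis
    using lower upper unfolding N_def by blast
qed

end
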